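(* Let $(X,\mathcal{O}(X))$ be a measurable space, $\mathcal{A}$ a unital $C^*$-algebra and $\mathcal{H}$ a Hilbert space with $\dim\mathcal{H}<\infty$. Then every $C^*$-extreme point of $I_{\mathcal{H}}(X,\mathcal{A})$ is an extreme point of the convex set $I_{\mathcal{H}}(X,\mathcal{A})$.
   Context: A CP instrument is a map $\mathcal{I}$ from $\mathcal{O}(X)$ to the completely positive maps $\mathcal{A}\to\mathcal{B}(\mathcal{H})$ such that for all $a\in\mathcal{A}$, $h,k\in\mathcal{H}$, $A\mapsto\langle h,\mathcal{I}(A)(a)k\rangle$ is a countably additive complex measure. It is UCP if $\mathcal{I}(X)(1_\mathcal{A})=I_\mathcal{H}$; $I_{\mathcal{H}}(X,\mathcal{A})$ is the (convex) set of UCP instruments. A $C^*$-convex combination of $\mathcal{I}$ is $\mathcal{I}(\cdot)=\sum_{i=1}^nT_i^*\mathcal{I}_i(\cdot)T_i$ with $\mathcal{I}_i\in I_{\mathcal{H}}(X,\mathcal{A})$, $T_i\in\mathcal{B}(\mathcal{H})$, $\sum T_i^*T_i=I_\mathcal{H}$; proper if all $T_i$ are invertible. $\mathcal{I}\in I_{\mathcal{H}}(X,\mathcal{A})$ is $C^*$-extreme if for every proper $C^*$-convex combination of $\mathcal{I}$ there are unitaries $U_i\in\mathcal{B}(\mathcal{H})$ with $\mathcal{I}_i(\cdot)=U_i^*\mathcal{I}(\cdot)U_i$ for all $i$. *)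

theory Defs
  imports "HOL-Analysis.Analysis"
begin

text \<open>Complex scalar multiplication is a
  parameter (HOL-Analysis has no complex vector space class), compatible with
  the real scalar multiplication.\<close>

class unital_cstar_algebra = real_normed_algebra_1 + banach +
  fixes scaleC :: "complex \<Rightarrow> 'a \<Rightarrow> 'a"
    and star :: "'a \<Rightarrow> 'a"
  assumes scaleC_add_right: "scaleC c (x + y) = scaleC c x + scaleC c y"
    and scaleC_add_left: "scaleC (b + c) x = scaleC b x + scaleC c x"
    and scaleC_scaleC: "scaleC b (scaleC c x) = scaleC (b * c) x"
    and scaleC_one: "scaleC 1 x = x"
    and scaleC_of_real: "scaleC (of_real r) x = scaleR r x"
    and norm_scaleC: "norm (scaleC c x) = cmod c * norm x"
    and scaleC_mult_left: "scaleC c x * y = scaleC c (x * y)"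
    and scaleC_mult_right: "x * scaleC c y = scaleC c (x * y)"
    and star_star: "star (star x) = x"
    and star_add: "star (x + y) = star x + star y"
    and star_scaleC: "star (scaleC c x) = scaleC (cnj c) (star x)"
    and star_mult: "star (x * y) = star y * star x"
    and cstar_identity: "norm (star x * x) = (norm x)\<^sup>2"

definition cinner :: "complex^'n \<Rightarrow> complex^'n \<Rightarrow> complex" where
  "cinner h k = (\<Sum>i\<in>UNIV. cnj (h $ i) * k $ i)"

definition adj :: "complex^'n^'m \<Rightarrow> complex^'m^'n" where
  "adj T = (\<chi> i j. cnj (T $ j $ i))"

definition cmat_scale :: "complex \<Rightarrow> complex^'n^'m \<Rightarrow> complex^'n^'m" where
  "cmat_scale c T = (\<chi> i j. c * T $ i $ j)"

definition invertible_op :: "complex^'n^'n \<Rightarrow> bool" where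
  "invertible_op T \<longleftrightarrow> (\<exists>S. T ** S = mat 1 \<and> S ** T = mat 1)"

definition unitary_op :: "complex^'n^'n \<Rightarrow> bool" where
  "unitary_op U \<longleftrightarrow> adj U ** U = mat 1 \<and> U ** adj U = mat 1"

definition clinear_map :: "('a::unital_cstar_algebra \<Rightarrow> complex^'n^'n) \<Rightarrow> bool" where
  "clinear_map \<phi> \<longleftrightarrow> (\<forall>x y. \<phi> (x + y) = \<phi> x + \<phi> y) \<and>
                      (\<forall>c x. \<phi> (scaleC c x) = cmat_scale c (\<phi> x))"

text \<open>Complete positivity: for every k, the k-th amplification maps positive
  elements of M_k(A), i.e. elements of the form B*B with B in M_k(A), to positive
  (semidefinite) elements of M_k(B(H)) = B(H^k).\<close>

definition completely_positive :: "('a::unital_cstar_algebra \<Rightarrow> complex^'n^'n) \<Rightarrow> bool" where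
  "completely_positive \<phi> \<longleftrightarrow> clinear_map \<phi> \<and>
     (\<forall>(k::nat) (b::nat \<Rightarrow> nat \<Rightarrow> 'a) (h::nat \<Rightarrow> complex^'n).
        let q = (\<Sum>i<k. \<Sum>j<k. cinner (h i) (\<phi> (\<Sum>l<k. star (b l i) * b l j) *v h j))
        in Im q = 0 \<and> Re q \<ge> 0)"

definition countably_additive_cmeasure :: "'x measure \<Rightarrow> ('x set \<Rightarrow> complex) \<Rightarrow> bool" where
  "countably_additive_cmeasure M \<mu> \<longleftrightarrow>
     (\<forall>F::nat \<Rightarrow> 'x set. range F \<subseteq> sets M \<longrightarrow> disjoint_family F \<longrightarrow>
        (\<lambda>i. \<mu> (F i)) sums \<mu> (\<Union>i. F i))"

text \<open>A CP instrument is a map on the measurable sets O(X) = sets M; outside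
  sets M we fix the (irrelevant) value 0 so that instruments are determined by
  their values on O(X).\<close>

definition cp_instrument ::
  "'x measure \<Rightarrow> ('x set \<Rightarrow> 'a::unital_cstar_algebra \<Rightarrow> complex^'n^'n) \<Rightarrow> bool" where
  "cp_instrument M I \<longleftrightarrow>
     (\<forall>A\<in>sets M. completely_positive (I A)) \<and>
     (\<forall>A. A \<notin> sets M \<longrightarrow> I A = (\<lambda>_. 0)) \<and>
     (\<forall>a h k. countably_additive_cmeasure M (\<lambda>A. cinner h (I A a *v k)))"

definition ucp_instruments ::
  "'x measure \<Rightarrow> ('x set \<Rightarrow> 'a::unital_cstar_algebra \<Rightarrow> complex^'n^'n) set" where
  "ucp_instruments M = {I. cp_instrument M I \<and> I (space M) 1 = mat 1}"

definition proper_cstar_convex_comb ::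
  "'x measure \<Rightarrow> ('x set \<Rightarrow> 'a::unital_cstar_algebra \<Rightarrow> complex^'n^'n) \<Rightarrow> nat \<Rightarrow>
   (nat \<Rightarrow> 'x set \<Rightarrow> 'a \<Rightarrow> complex^'n^'n) \<Rightarrow> (nat \<Rightarrow> complex^'n^'n) \<Rightarrow> bool" where
  "proper_cstar_convex_comb M I m Is T \<longleftrightarrow>
     (\<forall>i<m. Is i \<in> ucp_instruments M \<and> invertible_op (T i)) \<and>
     (\<Sum>i<m. adj (T i) ** T i) = mat 1 \<and>
     (\<forall>A a. I A a = (\<Sum>i<m. adj (T i) ** Is i A a ** T i))"

definition cstar_extreme ::
  "'x measure \<Rightarrow> ('x set \<Rightarrow> 'a::unital_cstar_algebra \<Rightarrow> complex^'n^'n) \<Rightarrow> bool" where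
  "cstar_extreme M I \<longleftrightarrow> I \<in> ucp_instruments M \<and>
     (\<forall>m Is T. proper_cstar_convex_comb M I m Is T \<longrightarrow>
        (\<exists>U. \<forall>i<m. unitary_op (U i) \<and> (\<forall>A a. Is i A a = adj (U i) ** I A a ** U i)))"

definition extreme_instrument ::
  "('x set \<Rightarrow> 'a \<Rightarrow> complex^'n^'n) set \<Rightarrow> ('x set \<Rightarrow> 'a \<Rightarrow> complex^'n^'n) \<Rightarrow> bool" where
  "extreme_instrument S I \<longleftrightarrow> I \<in> S \<and>
     (\<forall>I1\<in>S. \<forall>I2\<in>S. \<forall>t::real. 0 < t \<and> t < 1 \<and>
        (\<forall>A a. I A a = t *\<^sub>R I1 A a + (1 - t) *\<^sub>R I2 A a) \<longrightarrow> I1 = I \<and> I2 = I)"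

end

theory Submission
  imports Defs
begin

text \<open>A convex combination \<open>t I\<^sub>1 + (1 - t) I\<^sub>2\<close> is the proper C*-convex combination with
  the scalar coefficients \<open>\<surd>t\<close> and \<open>\<surd>(1 - t)\<close>. C*-extremality therefore makes \<open>I\<^sub>1\<close> and
  \<open>I\<^sub>2\<close> unitarily conjugate to \<open>I\<close>, so pointwise all three have the same Hilbert-Schmidt
  norm; since that norm is strictly convex, \<open>I\<^sub>1 = I\<^sub>2 = I\<close>.\<close>

lemma convex_comb_eq_norm_imp_eq:
  fixes x y :: "'a::real_inner"
  assumes "norm x = r" "norm y = r" "norm (t *\<^sub>R x + (1 - t) *\<^sub>R y) = r" "0 < t" "t < 1"
  shows "x = y"
proof (cases "r = 0")
  case True
  then show ?thesis using assms(1,2) by simp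
next
  case False
  have "norm (t *\<^sub>R x + (1 - t) *\<^sub>R y) = norm (t *\<^sub>R x) + norm ((1 - t) *\<^sub>R y)"
    using assms by (simp add: abs_of_pos distrib_right[symmetric])
  then have "(t * r * (1 - t)) *\<^sub>R y = ((1 - t) * r * t) *\<^sub>R x"
    unfolding norm_triangle_eq using assms by simp
  then show ?thesis
    using False assms(4,5) by (simp add: mult.commute mult.left_commute)
qed

lemma scaleR_mat_1: "r *\<^sub>R mat 1 = (mat (of_real r) :: 'a::real_algebra_1^'n^'n)"
  by (simp add: mat_def vec_eq_iff of_real_def)

lemma mat_of_real_mult: "mat (of_real r) ** A = r *\<^sub>R (A :: 'a::real_algebra_1^'n^'m)"
  by (metis scaleR_mat_1 scalar_matrix_assoc matrix_mul_lid)

lemma mult_mat_of_real: "A ** mat (of_real r) = r *\<^sub>R (A :: 'a::real_algebra_1^'n^'m)"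
  by (metis scaleR_mat_1 matrix_scalar_ac matrix_mul_rid)

lemma adj_adj [simp]: "adj (adj A) = A"
  by (simp add: adj_def vec_eq_iff)

lemma adj_matrix_mult: "adj (A ** B) = adj B ** adj A"
  by (simp add: adj_def matrix_matrix_mult_def vec_eq_iff mult.commute)

lemma adj_mat_of_real: "adj (mat (of_real r)) = mat (of_real r)"
  by (simp add: adj_def mat_def vec_eq_iff)

lemma invertible_op_mat_of_real:
  assumes "r \<noteq> 0"
  shows "invertible_op (mat (of_real r))"
proof -
  have prod: "mat (of_real a) ** mat (of_real b) = (mat (of_real (a * b)) :: complex^'n^'n)" for a b
    by (metis mat_of_real_mult scaleR_mat_1 scaleR_scaleR)
  have "r * inverse r = 1" "inverse r * r = 1"
    using assms by simp_all
  then show ?thesis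
    unfolding invertible_op_def by (metis prod of_real_1)
qed

lemma norm_power2_eq_Re_trace: "(norm (X::complex^'n^'m))\<^sup>2 = Re (trace (adj X ** X))"
proof -
  have "(norm X)\<^sup>2 = (\<Sum>i\<in>UNIV. \<Sum>j\<in>UNIV. (cmod (X$i$j))\<^sup>2)"
    by (simp add: norm_vec_def L2_set_def sum_nonneg)
  also have "\<dots> = (\<Sum>j\<in>UNIV. \<Sum>i\<in>UNIV. (cmod (X$i$j))\<^sup>2)"
    by (rule sum.swap)
  also have "\<dots> = Re (trace (adj X ** X))"
    by (simp only: cmod_power2) (simp add: trace_def adj_def matrix_matrix_mult_def power2_eq_square)
  finally show ?thesis .
qed

lemma norm_eq_if_trace_adj_mult_eq:
  fixes X :: "complex^'n^'m" and Y :: "complex^'n^'k"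
  assumes "trace (adj X ** X) = trace (adj Y ** Y)"
  shows "norm X = norm Y"
  using assms by (metis norm_power2_eq_Re_trace norm_ge_zero power2_eq_iff_nonneg)

lemma norm_isometry_mult:
  assumes "adj V ** V = mat 1"
  shows "norm (V ** X) = norm X"
proof (rule norm_eq_if_trace_adj_mult_eq)
  have "adj (V ** X) ** (V ** X) = adj X ** ((adj V ** V) ** X)"
    by (simp only: adj_matrix_mult matrix_mul_assoc)
  then show "trace (adj (V ** X) ** (V ** X)) = trace (adj X ** X)"
    by (simp add: assms)
qed

lemma norm_mult_coisometry:
  fixes U :: "complex^'n^'n"
  assumes "U ** adj U = mat 1"
  shows "norm (X ** U) = norm X"
proof (rule norm_eq_if_trace_adj_mult_eq)
  have "trace (adj (X ** U) ** (X ** U)) = trace (adj U ** (adj X ** X ** U))"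
    by (simp only: adj_matrix_mult matrix_mul_assoc)
  also have "\<dots> = trace (adj X ** X ** U ** adj U)"
    by (rule trace_mul_sym)
  finally show "trace (adj (X ** U) ** (X ** U)) = trace (adj X ** X)"
    by (simp add: assms flip: matrix_mul_assoc)
qed

lemma norm_unitary_conj:
  assumes "unitary_op U"
  shows "norm (adj U ** X ** U) = norm X"
proof -
  have "norm (adj U ** X ** U) = norm (adj U ** X)"
    using assms by (simp add: unitary_op_def norm_mult_coisometry)
  also have "\<dots> = norm X"
    using assms by (simp add: unitary_op_def norm_isometry_mult)
  finally show ?thesis .
qed

lemma adj_mat_sqrt_mult_mult_mat_sqrt:
  assumes "0 \<le> s"
  shows "adj (mat (of_real (sqrt s))) ** X ** mat (of_real (sqrt s)) = s *\<^sub>R X"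
  using assms by (simp add: adj_mat_of_real mat_of_real_mult mult_mat_of_real)

lemma proper_cstar_convex_comb_of_convex_comb:
  assumes "I\<^sub>1 \<in> ucp_instruments M" "I\<^sub>2 \<in> ucp_instruments M" "0 < t" "t < 1"
    and "\<And>A a. I A a = t *\<^sub>R I\<^sub>1 A a + (1 - t) *\<^sub>R I\<^sub>2 A a"
  shows "proper_cstar_convex_comb M I 2 (\<lambda>i. if i = 0 then I\<^sub>1 else I\<^sub>2)
           (\<lambda>i. mat (of_real (sqrt (if i = 0 then t else 1 - t))))"
proof -
  let ?T = "\<lambda>i::nat. mat (of_real (sqrt (if i = 0 then t else 1 - t))) :: complex^'n^'n"
  have sandwich: "adj (?T i) ** X ** ?T i = (if i = 0 then t else 1 - t) *\<^sub>R X"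
    for i and X :: "complex^'n^'n"
    using assms(3,4) by (cases "i = 0") (simp_all add: adj_mat_sqrt_mult_mult_mat_sqrt)
  have "(\<Sum>i<2. adj (?T i) ** ?T i) = (\<Sum>i<2. adj (?T i) ** mat 1 ** ?T i)"
    by (simp only: matrix_mul_rid)
  also have "\<dots> = mat 1"
    by (simp only: sandwich) (simp add: numeral_2_eq_2 flip: scaleR_add_left)
  finally show ?thesis
    unfolding proper_cstar_convex_comb_def
    using assms by (auto simp: sandwich numeral_2_eq_2 invertible_op_mat_of_real)
qed

lemma cstar_extreme_comb_norm_eq:
  assumes "cstar_extreme M I" "proper_cstar_convex_comb M I m Is T" "i < m"
  shows "norm (Is i A a) = norm (I A a)"
proof -
  obtain U where "\<forall>j<m. unitary_op (U j) \<and> (\<forall>A a. Is j A a = adj (U j) ** I A a ** U j)"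
    using assms(1,2) unfolding cstar_extreme_def by blast
  then have "unitary_op (U i)" "Is i A a = adj (U i) ** I A a ** U i"
    using assms(3) by simp_all
  then show ?thesis
    by (simp add: norm_unitary_conj)
qed

theorem theorem3p17:
  fixes M :: "'x measure"
    and I :: "'x set \<Rightarrow> 'a::unital_cstar_algebra \<Rightarrow> complex^'n::finite^'n"
  assumes "cstar_extreme M I"
  shows "extreme_instrument (ucp_instruments M) I"
proof -
  have "I\<^sub>1 = I \<and> I\<^sub>2 = I"
    if "I\<^sub>1 \<in> ucp_instruments M" "I\<^sub>2 \<in> ucp_instruments M" "0 < t" "t < 1"
      and comb: "\<And>A a. I A a = t *\<^sub>R I\<^sub>1 A a + (1 - t) *\<^sub>R I\<^sub>2 A a" for I\<^sub>1 I\<^sub>2 t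
  proof -
    note proper = proper_cstar_convex_comb_of_convex_comb[OF that]
    have "I\<^sub>1 A a = I\<^sub>2 A a" for A a
    proof (rule convex_comb_eq_norm_imp_eq[OF _ _ _ that(3,4)])
      show "norm (I\<^sub>1 A a) = norm (I A a)"
        using cstar_extreme_comb_norm_eq[OF assms proper, of 0 A a] by simp
      show "norm (I\<^sub>2 A a) = norm (I A a)"
        using cstar_extreme_comb_norm_eq[OF assms proper, of 1 A a] by simp
      show "norm (t *\<^sub>R I\<^sub>1 A a + (1 - t) *\<^sub>R I\<^sub>2 A a) = norm (I A a)"
        by (simp only: comb)
    qed
    then have "I\<^sub>1 A a = I A a" "I\<^sub>2 A a = I A a" for A a
      by (simp_all add: comb flip: scaleR_add_left)
    then show ?thesis
      by (simp add: fun_eq_iff)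
  qed
  moreover have "I \<in> ucp_instruments M"
    using assms by (simp add: cstar_extreme_def)
  ultimately show ?thesis
    unfolding extreme_instrument_def by auto
qed

end
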